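(* Let $a,b,c,n,m,p,q,r$ be integers all strictly greater than $1$, and let $$M=\begin{pmatrix} 1 & a & b\\ c & n & m\\ p & q & r\end{pmatrix}.$$ If $n=ac+1$, $r=bp+1$, $m=bc$ and $q=ap$, then $\mathrm{Cat}(M)\neq\emptyset$.
   Context: For an $n\times n$ matrix $M=(m_{ij})$ with entries in the natural numbers, $\mathrm{Cat}(M)$ denotes the collection of categories $A$ with exactly $n$ distinct objects $x_1,\dots,x_n$ such that $|A(x_i,x_j)|=m_{ij}$ for all $i,j$, where $A(x_i,x_j)$ is the set of morphisms from $x_i$ to $x_j$. *)

theory Defs
  imports Main
begin

text \<open>A (small) category whose objects are the indices 0,...,n-1, given in hom-set style:
  hom i j is the set of morphisms from object i to object j, ident i is the identity of i,
  and cmp i j k g f is the composite g o f of f : i -> j and g : j -> k.\<close>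

definition is_category ::
  "nat \<Rightarrow> (nat \<Rightarrow> nat \<Rightarrow> 'm set) \<Rightarrow> (nat \<Rightarrow> 'm) \<Rightarrow> (nat \<Rightarrow> nat \<Rightarrow> nat \<Rightarrow> 'm \<Rightarrow> 'm \<Rightarrow> 'm) \<Rightarrow> bool"
  where
  "is_category n hom ident cmp \<longleftrightarrow>
     (\<forall>i<n. ident i \<in> hom i i) \<and>
     (\<forall>i<n. \<forall>j<n. \<forall>k<n. \<forall>f\<in>hom i j. \<forall>g\<in>hom j k. cmp i j k g f \<in> hom i k) \<and>
     (\<forall>i<n. \<forall>j<n. \<forall>f\<in>hom i j. cmp i j j (ident j) f = f \<and> cmp i i j f (ident i) = f) \<and>
     (\<forall>i<n. \<forall>j<n. \<forall>k<n. \<forall>l<n. \<forall>f\<in>hom i j. \<forall>g\<in>hom j k. \<forall>h\<in>hom k l.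
        cmp i k l h (cmp i j k g f) = cmp i j l (cmp j k l h g) f)"

text \<open>Since all hom-sets are finite, morphisms can be taken to be
  natural numbers without loss of generality.\<close>

definition Cat_nonempty :: "nat \<Rightarrow> (nat \<Rightarrow> nat \<Rightarrow> nat) \<Rightarrow> bool" where
  "Cat_nonempty n M \<longleftrightarrow>
     (\<exists>(hom :: nat \<Rightarrow> nat \<Rightarrow> nat set) ident cmp.
        is_category n hom ident cmp \<and>
        (\<forall>i<n. \<forall>j<n. finite (hom i j) \<and> card (hom i j) = M i j))"

end

theory Submission
  imports Defs "HOL-Library.Nat_Bijection"
begin

text \<open>The matrix is \<open>M i j = Y i * X j + [i = j \<noteq> 0]\<close>, where \<open>X = (1, a, b)\<close> is the
  first row and \<open>Y = (1, c, p)\<close> the first column. Such a matrix is realised by a category in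
  which every non-identity morphism factors uniquely through \<open>x\<^sub>0\<close>, whose only endomorphism is
  its identity: a non-identity morphism \<open>x\<^sub>i \<rightarrow> x\<^sub>j\<close> is a pair of a morphism \<open>x\<^sub>i \<rightarrow> x\<^sub>0\<close> and a
  morphism \<open>x\<^sub>0 \<rightarrow> x\<^sub>j\<close>, and composition discards the inner two factors.\<close>

lemma Cat_nonempty_cong:
  assumes "\<And>i j. i < N \<Longrightarrow> j < N \<Longrightarrow> M i j = M' i j"
  shows "Cat_nonempty N M \<longleftrightarrow> Cat_nonempty N M'"
  using assms unfolding Cat_nonempty_def by auto

text \<open>Morphisms are encoded as naturals: \<open>0\<close> is the identity of every object \<open>i \<noteq> 0\<close>, and
  \<open>Suc (prod_encode (y, x))\<close> is the composite of \<open>y : x\<^sub>i \<rightarrow> x\<^sub>0\<close> with \<open>x : x\<^sub>0 \<rightarrow> x\<^sub>j\<close>.\<close>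

definition factor_hom :: "(nat \<Rightarrow> nat) \<Rightarrow> (nat \<Rightarrow> nat) \<Rightarrow> nat \<Rightarrow> nat \<Rightarrow> nat set" where
  "factor_hom Y X i j = (\<lambda>(y, x). Suc (prod_encode (y, x))) ` ({..<Y i} \<times> {..<X j})
     \<union> (if i = j \<and> i \<noteq> 0 then {0} else {})"

definition factor_ident :: "nat \<Rightarrow> nat" where
  "factor_ident i = (if i = 0 then Suc (prod_encode (0, 0)) else 0)"

definition factor_comp :: "nat \<Rightarrow> nat \<Rightarrow> nat \<Rightarrow> nat \<Rightarrow> nat \<Rightarrow> nat" where
  "factor_comp i j k g f = (if f = 0 then g else if g = 0 then f else
      Suc (prod_encode (fst (prod_decode (f - 1)), snd (prod_decode (g - 1)))))"

lemma is_category_factor: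
  assumes "X 0 = 1" "Y 0 = 1"
  shows "is_category N (factor_hom Y X) factor_ident factor_comp"
  unfolding is_category_def factor_hom_def factor_ident_def factor_comp_def
  using assms by (auto split: if_splits)

lemma finite_factor_hom: "finite (factor_hom Y X i j)"
  unfolding factor_hom_def by simp

lemma card_factor_hom:
  "card (factor_hom Y X i j) = Y i * X j + (if i = j \<and> i \<noteq> 0 then 1 else 0)"
proof -
  let ?pair = "\<lambda>(y, x). Suc (prod_encode (y, x))"
  have inj: "inj_on ?pair ({..<Y i} \<times> {..<X j})"
    by (auto simp: inj_on_def prod_encode_eq)
  have "card (?pair ` ({..<Y i} \<times> {..<X j})) = Y i * X j"
    using card_image[OF inj] by (simp add: card_cartesian_product)
  moreover have "0 \<notin> ?pair ` ({..<Y i} \<times> {..<X j})" by auto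
  ultimately show ?thesis unfolding factor_hom_def by auto
qed

theorem Cat_nonempty_factor:
  assumes "X 0 = 1" "Y 0 = 1"
  shows "Cat_nonempty N (\<lambda>i j. Y i * X j + (if i = j \<and> i \<noteq> 0 then 1 else 0))"
  unfolding Cat_nonempty_def
  by (rule exI[of _ "factor_hom Y X"], rule exI[of _ factor_ident], rule exI[of _ factor_comp])
    (simp add: is_category_factor[of X Y, OF assms] finite_factor_hom card_factor_hom)

theorem mainTheorem4:
  fixes a b c n m p q r :: nat
  assumes "a > 1" "b > 1" "c > 1" "n > 1" "m > 1" "p > 1" "q > 1" "r > 1"
    and "n = a * c + 1" "r = b * p + 1" "m = b * c" "q = a * p"
  shows "Cat_nonempty 3 (\<lambda>i j. [[1, a, b], [c, n, m], [p, q, r]] ! i ! j)"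
proof -
  define X where "X = (\<lambda>j::nat. [1, a, b] ! j)"
  define Y where "Y = (\<lambda>i::nat. [1, c, p] ! i)"
  have "Cat_nonempty 3 (\<lambda>i j. [[1, a, b], [c, n, m], [p, q, r]] ! i ! j) \<longleftrightarrow>
      Cat_nonempty 3 (\<lambda>i j. Y i * X j + (if i = j \<and> i \<noteq> 0 then 1 else 0))"
  proof (rule Cat_nonempty_cong)
    fix i j :: nat assume "i < 3" "j < 3"
    then have "i \<in> {0, 1, 2}" "j \<in> {0, 1, 2}" by auto
    then show "[[1, a, b], [c, n, m], [p, q, r]] ! i ! j
        = Y i * X j + (if i = j \<and> i \<noteq> 0 then 1 else 0)"
      using assms by (auto simp: X_def Y_def mult.commute)
  qed
  also have "\<dots>"
    by (rule Cat_nonempty_factor) (simp_all add: X_def Y_def)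
  finally show ?thesis .
qed

end
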